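(* Let $p$ be any prime, let $m,k$ be positive integers, let $q=p^m$, and let $U_{q+1}=\{x\in\mathbb{F}_{q^2}: x^{q+1}=1\}$. Then for any $a,b\in\mathbb{F}_{q^2}$ with $(a,b)\neq(0,0)$, the number of solutions $x\in U_{q+1}$ of the equation \[ b x^{p^k+1}+a x^{p^k}+a^{q}x+b^{q}=0 \] is one of $0$, $1$, $2$, or $p^{\gcd(k,m)}+1$. *)

theory Defs
  imports "HOL-Computational_Algebra.Primes" "HOL-Library.Cardinality"
begin

definition unit_circle :: "nat \<Rightarrow> 'a::field set" where
  "unit_circle q = {x. x ^ (q + 1) = 1}"

end

theory Submission
  imports Defs "HOL-Number_Theory.Residues" "HOL-Algebra.Algebraic_Closure_Type"
begin

text \<open>
  Put \<open>q = p ^ m\<close>, \<open>Q = p ^ k\<close> and \<open>U = unit_circle q\<close>. Replacing \<open>x ^ Q\<close> by a new variable \<open>y\<close>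
  turns the left-hand side into a biaffine form \<open>G y x\<close>. Suppose the equation has three distinct
  roots \<open>r1, r2, r3\<close> in \<open>U\<close>. Since \<open>x ^ Q - r ^ Q = (x - r) ^ Q\<close>, interpolating \<open>G\<close> at the corners
  \<open>(ri ^ Q, rj)\<close> rewrites the equation, up to a nonzero factor, as
  \<open>A (x - r1) ^ Q (x - r2) + C (x - r1) (x - r2) ^ Q = 0\<close>, and the root \<open>r3\<close> normalises this to
  \<open>t ^ Q = t\<close> for the cross ratio \<open>t\<close> of \<open>x\<close> with respect to \<open>r1, r2, r3\<close>. As \<open>x ^ q = 1 / x\<close> on
  \<open>U\<close>, the cross ratio maps \<open>U - {r2}\<close> injectively, hence by counting bijectively, onto the
  subfield \<open>{t. t ^ q = t}\<close> of order \<open>q\<close>. So the roots other than \<open>r2\<close> correspond to the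
  elements fixed by both \<open>t \<mapsto> t ^ q\<close> and \<open>t \<mapsto> t ^ Q\<close>, which form the subfield of order
  \<open>p ^ gcd k m\<close>.
\<close>

hide_const (open) Divisibility.prime Ring_Divisibility.mult_of

section \<open>Frobenius powers\<close>

lemma frobenius_diff:
  fixes x y :: "'a::comm_ring_1"
  assumes "prime CHAR('a)"
  shows "(x - y) ^ (CHAR('a) ^ n) = x ^ (CHAR('a) ^ n) - y ^ (CHAR('a) ^ n)"
proof -
  have "x ^ (CHAR('a) ^ n) = ((x - y) + y) ^ (CHAR('a) ^ n)" by simp
  also have "\<dots> = (x - y) ^ (CHAR('a) ^ n) + y ^ (CHAR('a) ^ n)"
    using assms by (rule freshmans_dream') simp
  finally show ?thesis by simp
qed

lemma frobenius_eq_iff: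
  fixes x y :: "'a::idom"
  assumes "prime CHAR('a)"
  shows "x ^ (CHAR('a) ^ n) = y ^ (CHAR('a) ^ n) \<longleftrightarrow> x = y"
  using frobenius_diff[OF assms, of x y n] by (metis eq_iff_diff_eq_0 power_eq_0_iff)

lemma funpow_fixpoint_gcd:
  assumes "(f ^^ m) x = x" and "(f ^^ n) x = x"
  shows "(f ^^ gcd m n) x = x"
  using assms
proof (induction m n rule: gcd_nat_induct)
  case (step m n)
  then have "(f ^^ (m mod n)) x = x"
    by (simp add: funpow_mod_eq)
  with step show ?case
    by (simp only: gcd_red_nat[of m n])
qed simp

lemma funpow_power: "((\<lambda>y. y ^ p) ^^ n) x = (x::'a::monoid_mult) ^ (p ^ n)"
  by (induction n) (simp_all add: mult.commute flip: power_mult)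

lemma power_fixed_iff_gcd:
  fixes x :: "'a::monoid_mult"
  shows "x ^ (p ^ k) = x \<and> x ^ (p ^ m) = x \<longleftrightarrow> x ^ (p ^ gcd k m) = x"
proof
  assume "x ^ (p ^ k) = x \<and> x ^ (p ^ m) = x"
  then have "((\<lambda>y. y ^ p) ^^ gcd k m) x = x"
    by (intro funpow_fixpoint_gcd) (simp_all add: funpow_power)
  then show "x ^ (p ^ gcd k m) = x"
    by (simp add: funpow_power)
next
  assume "x ^ (p ^ gcd k m) = x"
  then have "x ^ (p ^ j) = x" if "gcd k m dvd j" for j
    using funpow_mod_eq[where f = "\<lambda>y. y ^ p" and n = "gcd k m" and m = j and x = x] that
    by (simp add: funpow_power)
  then show "x ^ (p ^ k) = x \<and> x ^ (p ^ m) = x"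
    by simp
qed

section \<open>Biaffine forms and cross ratios\<close>

text \<open>The left-hand side of the equation with \<open>x ^ Q\<close> replaced by an independent variable \<open>y\<close>.\<close>

definition biaffine :: "'a::comm_ring \<Rightarrow> 'a \<Rightarrow> 'a \<Rightarrow> 'a \<Rightarrow> 'a \<Rightarrow> 'a \<Rightarrow> 'a" where
  "biaffine a b c d y w = b * y * w + a * y + c * w + d"

lemma biaffine_power:
  "biaffine a b c d (x ^ n) x = b * x ^ (n + 1) + a * x ^ n + c * x + d"
  by (simp add: biaffine_def mult_ac)

lemma biaffine_interpolation:
  fixes a b c d :: "'a::comm_ring"
  shows "biaffine a b c d y w * ((R1 - R2) * (r1 - r2)) =
           biaffine a b c d R1 r1 * (y - R2) * (w - r2) - biaffine a b c d R1 r2 * (y - R2) * (w - r1)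
         - biaffine a b c d R2 r1 * (y - R1) * (w - r2) + biaffine a b c d R2 r2 * (y - R1) * (w - r1)"
  unfolding biaffine_def by (simp add: algebra_simps)

lemma biaffine_eq_0_at_corners:
  fixes a b c d :: "'a::field"
  assumes "R1 \<noteq> R2" "r1 \<noteq> r2"
    and "biaffine a b c d R1 r1 = 0" "biaffine a b c d R1 r2 = 0"
    and "biaffine a b c d R2 r1 = 0" "biaffine a b c d R2 r2 = 0"
  shows "(a, b, c, d) = (0, 0, 0, 0)"
proof -
  have "biaffine a b c d y w = 0" for y w
    using biaffine_interpolation[of a b c d y w R1 R2 r1 r2] assms by simp
  from this[of 0 0] this[of 0 1] this[of 1 0] this[of 1 1] show ?thesis
    by (simp add: biaffine_def)
qed

text \<open>The Moebius transformation sending \<open>r1, r2, r3\<close> to \<open>0, \<infinity>, 1\<close>; at the pole \<open>z = r2\<close>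
  division by zero makes it \<open>0\<close>.\<close>

definition cross_ratio :: "'a::field \<Rightarrow> 'a \<Rightarrow> 'a \<Rightarrow> 'a \<Rightarrow> 'a" where
  "cross_ratio z r1 r2 r3 = ((z - r1) * (r3 - r2)) / ((z - r2) * (r3 - r1))"

lemma cross_ratio_pole [simp]: "cross_ratio r2 r1 r2 r3 = 0"
  by (simp add: cross_ratio_def)

lemma inj_on_cross_ratio:
  assumes "r1 \<noteq> r2" "r3 \<noteq> r1" "r3 \<noteq> r2"
  shows "inj_on (\<lambda>z. cross_ratio z r1 r2 r3) (- {r2})"
proof (rule inj_onI)
  fix z z' assume z: "z \<in> - {r2}" "z' \<in> - {r2}" and eq: "cross_ratio z r1 r2 r3 = cross_ratio z' r1 r2 r3"
  then have "(z - r1) * (z' - r2) = (z' - r1) * (z - r2)"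
    using assms by (simp add: cross_ratio_def frac_eq_eq)
  then have "(z - z') * (r1 - r2) = 0"
    by (simp add: algebra_simps)
  then show "z = z'"
    using assms by simp
qed

lemma cross_ratio_inverse:
  assumes "z \<noteq> 0" "r1 \<noteq> 0" "r2 \<noteq> 0" "r3 \<noteq> 0"
  shows "cross_ratio (inverse z) (inverse r1) (inverse r2) (inverse r3) = cross_ratio z r1 r2 r3"
proof -
  define D where "D = z * r1 * r2 * r3"
  have "D \<noteq> 0" using assms by (simp add: D_def)
  have "(inverse z - inverse r1) * (inverse r3 - inverse r2) = ((z - r1) * (r3 - r2)) / D"
    "(inverse z - inverse r2) * (inverse r3 - inverse r1) = ((z - r2) * (r3 - r1)) / D"
    using assms by (simp_all add: D_def field_simps)
  with \<open>D \<noteq> 0\<close> show ?thesis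
    by (simp add: cross_ratio_def)
qed

lemma cross_ratio_frobenius:
  fixes z r1 r2 r3 :: "'a::field"
  assumes "prime CHAR('a)" and "Q = CHAR('a) ^ n"
  shows "cross_ratio z r1 r2 r3 ^ Q = cross_ratio (z ^ Q) (r1 ^ Q) (r2 ^ Q) (r3 ^ Q)"
  using frobenius_diff[OF assms(1)] assms(2)
  by (simp add: cross_ratio_def power_divide power_mult_distrib)

lemma two_term_eq_0_iff_ratio_fixed:
  fixes A C u v u' v' :: "'a::field"
  assumes "A \<noteq> 0" "v \<noteq> 0" "u' \<noteq> 0" "v' \<noteq> 0"
    and "A * u' ^ Q * v' + C * u' * v' ^ Q = 0"
  shows "A * u ^ Q * v + C * u * v ^ Q = 0 \<longleftrightarrow> ((u * v') / (v * u')) ^ Q = (u * v') / (v * u')"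
proof -
  have C: "C = - A * u' ^ Q * v' / (u' * v' ^ Q)"
    using assms by (simp add: field_simps add_eq_0_iff2)
  have "A * u ^ Q * v + C * u * v ^ Q = A / (u' * v' ^ Q) * ((u * v') ^ Q * (v * u') - (u * v') * (v * u') ^ Q)"
    using assms by (simp add: C field_simps)
  also have "\<dots> = 0 \<longleftrightarrow> (u * v') ^ Q * (v * u') = (u * v') * (v * u') ^ Q"
    using assms by simp
  also have "\<dots> \<longleftrightarrow> ((u * v') / (v * u')) ^ Q = (u * v') / (v * u')"
    using assms by (simp add: power_divide frac_eq_eq)
  finally show ?thesis .
qed

lemma biaffine_frobenius_root_iff_cross_ratio_fixed:
  fixes a b c d r1 r2 r3 z :: "'a::field"
  assumes "prime CHAR('a)" and Q: "Q = CHAR('a) ^ n"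
    and roots: "biaffine a b c d (r1 ^ Q) r1 = 0" "biaffine a b c d (r2 ^ Q) r2 = 0"
      "biaffine a b c d (r3 ^ Q) r3 = 0"
    and "distinct [r1, r2, r3]" and "(a, b, c, d) \<noteq> (0, 0, 0, 0)"
  shows "biaffine a b c d (z ^ Q) z = 0 \<longleftrightarrow> cross_ratio z r1 r2 r3 ^ Q = cross_ratio z r1 r2 r3"
proof -
  have neq: "r1 \<noteq> r2" "r1 \<noteq> r3" "r2 \<noteq> r3"
    using \<open>distinct [r1, r2, r3]\<close> by auto
  have frob: "(x - y) ^ Q = x ^ Q - y ^ Q" for x y :: 'a
    using frobenius_diff[OF assms(1)] Q by simp
  have "r1 ^ Q \<noteq> r2 ^ Q"
    using frobenius_eq_iff[OF assms(1)] Q neq by auto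
  define A where "A = biaffine a b c d (r2 ^ Q) r1"
  define C where "C = biaffine a b c d (r1 ^ Q) r2"
  define E where "E w = A * (w - r1) ^ Q * (w - r2) + C * (w - r1) * (w - r2) ^ Q" for w
  \<comment> \<open>Of the four corner values, those at the roots \<open>(r1 ^ Q, r1)\<close> and \<open>(r2 ^ Q, r2)\<close> vanish.\<close>
  have expand: "biaffine a b c d (w ^ Q) w * ((r1 ^ Q - r2 ^ Q) * (r1 - r2)) = - E w" for w
    using biaffine_interpolation[of a b c d "w ^ Q" w "r1 ^ Q" "r2 ^ Q" r1 r2] roots
    unfolding E_def A_def C_def frob by (simp add: algebra_simps)
  have "(r1 ^ Q - r2 ^ Q) * (r1 - r2) \<noteq> 0"
    using \<open>r1 ^ Q \<noteq> r2 ^ Q\<close> neq by simp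
  then have root_iff: "biaffine a b c d (w ^ Q) w = 0 \<longleftrightarrow> E w = 0" for w
    by (metis expand mult_eq_0_iff neg_equal_0_iff_equal)
  have "E r3 = 0"
    using roots(3) root_iff by blast
  have "A \<noteq> 0"
  proof
    assume "A = 0"
    with \<open>E r3 = 0\<close> neq have "C = 0"
      by (auto simp: E_def)
    with \<open>A = 0\<close> show False
      using biaffine_eq_0_at_corners[OF \<open>r1 ^ Q \<noteq> r2 ^ Q\<close>, of r1 r2 a b c d] roots assms(7)
        neq by (simp add: A_def C_def)
  qed
  show ?thesis
  proof (cases "z = r2")
    case False
    then show ?thesis
      using two_term_eq_0_iff_ratio_fixed[OF \<open>A \<noteq> 0\<close>,
          where C = C and Q = Q and u = "z - r1" and v = "z - r2" and u' = "r3 - r1" and v' = "r3 - r2"]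
        \<open>E r3 = 0\<close> neq
      by (simp add: root_iff E_def cross_ratio_def)
  qed (use roots(2) Q assms(1) prime_gt_0_nat in simp)
qed

section \<open>Finite fields\<close>

lemma ring_of_type_algebra_nat_pow:
  "x [^]\<^bsub>ring_of_type_algebra\<^esub> (n::nat) = (x::'a::field) ^ n"
  by (induction n) (simp_all add: ring_of_type_algebra_def)

lemma finite_field_power_card_minus_1:
  fixes x :: "'a::{field,finite}"
  assumes "x \<noteq> 0"
  shows "x ^ (CARD('a) - 1) = 1"
proof -
  let ?R = "ring_of_type_algebra :: 'a ring"
  interpret F: field ?R
    by (rule field_from_type_algebra)
  interpret G: group "mult_of ?R"
    by (rule F.field_mult_group)
  have "x \<in> carrier (mult_of ?R)"
    using assms by (simp add: ring_of_type_algebra_def)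
  then have "x [^]\<^bsub>mult_of ?R\<^esub> Coset.order (mult_of ?R) = \<one>\<^bsub>mult_of ?R\<^esub>"
    by (rule G.pow_order_eq_1)
  moreover have "Coset.order (mult_of ?R) = CARD('a) - 1"
    by (simp add: F.order_mult_of Coset.order_def ring_of_type_algebra_def)
  ultimately show ?thesis
    by (simp add: Multiplicative_Group.nat_pow_mult_of ring_of_type_algebra_nat_pow)
      (simp add: ring_of_type_algebra_def)
qed

lemma finite_field_generator:
  obtains g :: "'a::{field,finite}" where "g \<noteq> 0" and "\<And>x. x \<noteq> 0 \<Longrightarrow> \<exists>i. x = g ^ i"
proof -
  let ?R = "ring_of_type_algebra :: 'a ring"
  interpret F: field ?R
    by (rule field_from_type_algebra)
  have "finite (carrier ?R)"
    by (simp add: ring_of_type_algebra_def)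
  then obtain g where g: "g \<in> carrier (mult_of ?R)"
    and gen: "carrier (mult_of ?R) = {g [^]\<^bsub>?R\<^esub> i | i::nat. i \<in> UNIV}"
    using F.finite_field_mult_group_has_gen by blast
  have "\<exists>i. x = g ^ i" if "x \<noteq> 0" for x
  proof -
    have "x \<in> carrier (mult_of ?R)"
      using that by (simp add: ring_of_type_algebra_def)
    then show ?thesis
      unfolding gen by (auto simp: ring_of_type_algebra_nat_pow)
  qed
  moreover have "g \<noteq> 0"
    using g by (simp add: ring_of_type_algebra_def)
  ultimately show thesis
    using that by blast
qed

lemma card_roots_of_unity_le:
  assumes "n > 0"
  shows "card {x::'a::idom. x ^ n = 1} \<le> n"
proof -
  define p :: "'a poly" where "p = monom 1 n + [:-1:]"
  have "degree p = n"
    using assms by (simp add: p_def degree_add_eq_left degree_monom_eq)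
  then have "p \<noteq> 0"
    using assms by auto
  moreover have "{x::'a. x ^ n = 1} = {x. poly p x = 0}"
    by (simp add: p_def poly_monom)
  ultimately show ?thesis
    using card_poly_roots_bound[of p] \<open>degree p = n\<close> by simp
qed

lemma card_finite_field_ge_2: "CARD('a::{field,finite}) \<ge> 2"
  using card_mono[of "UNIV :: 'a set" "{0, 1}"] by simp

lemma inj_on_power_generator:
  fixes g :: "'a::{field,finite}"
  assumes "g \<noteq> 0" and gen: "\<And>x. x \<noteq> 0 \<Longrightarrow> \<exists>i. x = g ^ i"
  shows "inj_on (\<lambda>i. g ^ i) {..<CARD('a) - 1}"
proof (rule linorder_inj_onI')
  have order: "CARD('a) - 1 \<le> j" if "g ^ j = 1" "j > 0" for j
  proof -
    have "x ^ j = 1" if "x \<noteq> 0" for x :: 'a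
    proof -
      obtain i where "x = g ^ i"
        using gen \<open>x \<noteq> 0\<close> by blast
      also have "(g ^ i) ^ j = (g ^ j) ^ i"
        by (simp flip: power_mult add: mult.commute)
      finally show ?thesis
        using \<open>g ^ j = 1\<close> by simp
    qed
    then have "UNIV - {0} \<subseteq> {x::'a. x ^ j = 1}"
      by blast
    then have "card (UNIV - {0::'a}) \<le> card {x::'a. x ^ j = 1}"
      by (intro card_mono) auto
    also have "\<dots> \<le> j"
      using card_roots_of_unity_le \<open>j > 0\<close> by blast
    finally show ?thesis
      by (simp add: card_Diff_singleton)
  qed
  fix i j assume "i \<in> {..<CARD('a) - 1}" "j \<in> {..<CARD('a) - 1}" "i < j"
  show "g ^ i \<noteq> g ^ j"
  proof
    assume "g ^ i = g ^ j"
    then have "g ^ i * g ^ (j - i) = g ^ i * 1"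
      using \<open>i < j\<close> by (metis le_add_diff_inverse less_imp_le_nat mult_1_right power_add)
    then have "g ^ (j - i) = 1"
      using \<open>g \<noteq> 0\<close> by simp
    with order \<open>i < j\<close> \<open>j \<in> {..<CARD('a) - 1}\<close> show False
      by fastforce
  qed
qed

lemma card_roots_of_unity_finite_field:
  assumes "n dvd CARD('a::{field,finite}) - 1"
  shows "card {x::'a. x ^ n = 1} = n"
proof (rule antisym)
  define N where "N = CARD('a) - 1"
  have "N > 0"
    using card_finite_field_ge_2[where 'a = 'a] by (simp add: N_def)
  with assms have "n > 0"
    by (cases n) (auto simp: N_def)
  then show "card {x::'a. x ^ n = 1} \<le> n"
    by (rule card_roots_of_unity_le)
  obtain g :: 'a where "g \<noteq> 0" and gen: "\<And>x. x \<noteq> 0 \<Longrightarrow> \<exists>i. x = g ^ i"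
    using finite_field_generator by blast
  obtain e where "N = n * e"
    using assms by (auto simp: N_def)
  have "inj_on (\<lambda>i. g ^ i) ((\<lambda>i. i * e) ` {..<n})"
    by (rule inj_on_subset[OF inj_on_power_generator[OF \<open>g \<noteq> 0\<close> gen]])
      (use \<open>N = n * e\<close> \<open>N > 0\<close> in \<open>auto simp: N_def\<close>)
  moreover have "inj_on (\<lambda>i. i * e) {..<n}"
    using \<open>N > 0\<close> \<open>N = n * e\<close> by (simp add: inj_on_def)
  ultimately have "inj_on (\<lambda>i. g ^ (i * e)) {..<n}"
    using comp_inj_on[of "\<lambda>i. i * e" "{..<n}" "\<lambda>i. g ^ i"] by (simp add: comp_def)
  then have "card ((\<lambda>i. g ^ (i * e)) ` {..<n}) = n"
    by (simp add: card_image)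
  moreover have "(\<lambda>i. g ^ (i * e)) ` {..<n} \<subseteq> {x. x ^ n = 1}"
  proof -
    have "(g ^ (i * e)) ^ n = (g ^ N) ^ i" for i
      by (simp add: \<open>N = n * e\<close> flip: power_mult) (simp add: mult_ac)
    then show ?thesis
      using finite_field_power_card_minus_1[OF \<open>g \<noteq> 0\<close>] by (auto simp: N_def)
  qed
  ultimately show "n \<le> card {x::'a. x ^ n = 1}"
    by (metis card_mono finite)
qed

lemma card_power_fixed_finite_field:
  assumes "CARD('a::{field,finite}) = P ^ r" and "r > 0"
  shows "card {x::'a. x ^ P = x} = P"
proof -
  have "P ^ r \<ge> 2"
    using card_finite_field_ge_2[where 'a = 'a] assms(1) by simp
  then have "P \<noteq> 0" "P \<noteq> 1"
    using \<open>r > 0\<close> by (metis not_numeral_le_zero zero_power, auto)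
  then have "P \<ge> 2"
    by linarith
  have fixed_iff: "x ^ P = x \<longleftrightarrow> x = 0 \<or> x ^ (P - 1) = 1" for x :: 'a
  proof -
    have "x ^ P = x * x ^ (P - 1)"
      using \<open>P \<noteq> 0\<close> by (simp flip: power_Suc)
    then show ?thesis
      using \<open>P \<ge> 2\<close> by (cases "x = 0") auto
  qed
  have "P mod (P - 1) = 1 mod (P - 1)"
    using mod_add_self1[of "P - 1" 1] \<open>P \<ge> 2\<close> by simp
  then have "P ^ r mod (P - 1) = 1 mod (P - 1)"
    by (metis power_mod power_one)
  then have "(P - 1) dvd (P ^ r - 1)"
    using mod_eq_dvd_iff_nat[of 1 "P ^ r" "P - 1"] \<open>P ^ r \<ge> 2\<close> by simp
  then have "card {x::'a. x ^ (P - 1) = 1} = P - 1"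
    using assms by (simp add: card_roots_of_unity_finite_field)
  moreover have "{x::'a. x ^ P = x} = insert 0 {x. x ^ (P - 1) = 1}"
    using fixed_iff by blast
  moreover have "(0::'a) \<notin> {x. x ^ (P - 1) = 1}"
    using \<open>P \<ge> 2\<close> by (simp add: zero_power)
  ultimately show ?thesis
    using \<open>P \<ge> 2\<close> by simp
qed

lemma prime_CHAR_finite_field: "prime CHAR('a::{field,finite})"
  by (rule prime_CHAR_semidom) (simp add: finite_imp_CHAR_pos)

lemma CHAR_finite_field_eq:
  assumes "CARD('a::{field,finite}) = p ^ n" and "prime p"
  shows "CHAR('a) = p"
proof -
  have "CHAR('a) dvd p ^ n"
    using CHAR_dvd_CARD assms(1) by metis
  then have "CHAR('a) dvd p"
    using prime_CHAR_finite_field prime_dvd_power by blast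
  then show ?thesis
    using prime_CHAR_finite_field assms(2) primes_dvd_imp_eq by blast
qed

section \<open>The unit circle\<close>

lemma unit_circle_nonzero: "x \<in> unit_circle q \<Longrightarrow> x \<noteq> 0"
  by (auto simp: unit_circle_def)

lemma unit_circle_power_eq_inverse: "x \<in> unit_circle q \<Longrightarrow> x ^ q = inverse x"
  by (simp add: unit_circle_def inverse_unique)

lemma card_unit_circle:
  assumes "CARD('a::{field,finite}) = q ^ 2"
  shows "card (unit_circle q :: 'a set) = q + 1"
proof -
  have "CARD('a) - 1 = (q + 1) * (q - 1)"
    using assms by (cases q) (simp_all add: power2_eq_square)
  then have "q + 1 dvd CARD('a) - 1"
    by (simp only: dvd_triv_left)
  then show ?thesis
    unfolding unit_circle_def by (rule card_roots_of_unity_finite_field)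
qed

lemma cross_ratio_unit_circle_fixed:
  fixes z r1 r2 r3 :: "'a::field"
  assumes "prime CHAR('a)" and "q = CHAR('a) ^ m"
    and "z \<in> unit_circle q" "r1 \<in> unit_circle q" "r2 \<in> unit_circle q" "r3 \<in> unit_circle q"
  shows "cross_ratio z r1 r2 r3 ^ q = cross_ratio z r1 r2 r3"
proof -
  have "cross_ratio z r1 r2 r3 ^ q = cross_ratio (z ^ q) (r1 ^ q) (r2 ^ q) (r3 ^ q)"
    by (rule cross_ratio_frobenius[OF assms(1,2)])
  also have "\<dots> = cross_ratio (inverse z) (inverse r1) (inverse r2) (inverse r3)"
    using assms(3-) by (simp add: unit_circle_power_eq_inverse)
  also have "\<dots> = cross_ratio z r1 r2 r3"
    using assms(3-) by (simp add: cross_ratio_inverse unit_circle_nonzero)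
  finally show ?thesis .
qed

lemma cross_ratio_image_unit_circle:
  fixes r1 r2 r3 :: "'a::{field,finite}"
  assumes "CARD('a) = q ^ 2" and "q = CHAR('a) ^ m"
    and "r1 \<in> unit_circle q" "r2 \<in> unit_circle q" "r3 \<in> unit_circle q"
    and "distinct [r1, r2, r3]"
  shows "(\<lambda>z. cross_ratio z r1 r2 r3) ` (unit_circle q - {r2}) = {t. t ^ q = t}"
proof (rule card_subset_eq)
  show "(\<lambda>z. cross_ratio z r1 r2 r3) ` (unit_circle q - {r2}) \<subseteq> {t. t ^ q = t}"
    using cross_ratio_unit_circle_fixed[OF prime_CHAR_finite_field assms(2)] assms(3-5) by auto
  have "inj_on (\<lambda>z. cross_ratio z r1 r2 r3) (unit_circle q - {r2})"
    by (rule inj_on_subset[OF inj_on_cross_ratio]) (use assms(6) in auto)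
  then have "card ((\<lambda>z. cross_ratio z r1 r2 r3) ` (unit_circle q - {r2})) = q"
    using card_unit_circle[OF assms(1)] assms(4) by (simp add: card_image)
  also have "q = card {t::'a. t ^ q = t}"
    using card_power_fixed_finite_field[OF assms(1)] by simp
  finally show "card ((\<lambda>z. cross_ratio z r1 r2 r3) ` (unit_circle q - {r2})) = card {t::'a. t ^ q = t}" .
qed simp

lemma card_le_2_or_three_distinct:
  obtains "card S \<le> 2" | x y z where "x \<in> S" "y \<in> S" "z \<in> S" "distinct [x, y, z]"
proof (cases "card S \<le> 2")
  case False
  then obtain T where "T \<subseteq> S" "card T = 3"
    by (metis not_le_imp_less obtain_subset_with_card_n Suc_leI numeral_2_eq_2 numeral_3_eq_3)
  then show ?thesis
    using that(2) by (auto simp: card_3_iff)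
qed (rule that(1))

lemma card_unit_circle_roots_if_three_roots:
  fixes a b c d :: "'a::{field,finite}"
  assumes card: "CARD('a) = (p ^ m) ^ 2" and "prime p" and "m > 0"
    and S: "S = {x \<in> unit_circle (p ^ m). biaffine a b c d (x ^ p ^ k) x = 0}"
    and nonzero: "(a, b, c, d) \<noteq> (0, 0, 0, 0)"
    and roots: "r1 \<in> S" "r2 \<in> S" "r3 \<in> S" and distinct: "distinct [r1, r2, r3]"
  shows "card S = p ^ gcd k m + 1"
proof -
  let ?\<phi> = "\<lambda>z. cross_ratio z r1 r2 r3"
  have "CHAR('a) = p"
    using CHAR_finite_field_eq card \<open>prime p\<close> by (metis power_mult)
  have on_circle: "r1 \<in> unit_circle (p ^ m)" "r2 \<in> unit_circle (p ^ m)" "r3 \<in> unit_circle (p ^ m)"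
    and are_roots: "biaffine a b c d (r1 ^ p ^ k) r1 = 0" "biaffine a b c d (r2 ^ p ^ k) r2 = 0"
      "biaffine a b c d (r3 ^ p ^ k) r3 = 0"
    using roots by (simp_all add: S)
  have root_iff: "biaffine a b c d (z ^ p ^ k) z = 0 \<longleftrightarrow> ?\<phi> z ^ p ^ k = ?\<phi> z" for z
    using biaffine_frobenius_root_iff_cross_ratio_fixed[OF prime_CHAR_finite_field _ are_roots distinct nonzero]
      \<open>CHAR('a) = p\<close> by blast
  have "?\<phi> ` (S - {r2}) = {t \<in> ?\<phi> ` (unit_circle (p ^ m) - {r2}). t ^ p ^ k = t}"
    unfolding S root_iff by blast
  also have "?\<phi> ` (unit_circle (p ^ m) - {r2}) = {t. t ^ p ^ m = t}"
    using cross_ratio_image_unit_circle[OF card _ on_circle distinct] \<open>CHAR('a) = p\<close> by blast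
  also have "{t \<in> {t::'a. t ^ p ^ m = t}. t ^ p ^ k = t} = {t. t ^ p ^ k = t \<and> t ^ p ^ m = t}"
    by blast
  also have "\<dots> = {t. t ^ p ^ gcd k m = t}"
    by (simp only: power_fixed_iff_gcd)
  finally have image: "?\<phi> ` (S - {r2}) = {t. t ^ p ^ gcd k m = t}" .
  have "gcd k m dvd 2 * m"
    by (intro dvd_mult) simp
  then obtain r where "2 * m = gcd k m * r"
    by (rule dvdE)
  with \<open>m > 0\<close> have "r > 0"
    by (cases r) auto
  have "CARD('a) = (p ^ gcd k m) ^ r"
    using card \<open>2 * m = gcd k m * r\<close> by (simp flip: power_mult add: mult.commute)
  then have card_fixed: "card {t::'a. t ^ p ^ gcd k m = t} = p ^ gcd k m"
    using \<open>r > 0\<close> by (rule card_power_fixed_finite_field)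
  have "inj_on ?\<phi> (S - {r2})"
    by (rule inj_on_subset[OF inj_on_cross_ratio]) (use distinct in auto)
  then have "card (S - {r2}) = card (?\<phi> ` (S - {r2}))"
    by (simp add: card_image)
  also have "\<dots> = p ^ gcd k m"
    unfolding image card_fixed ..
  finally show ?thesis
    using card.remove[OF finite roots(2)] by simp
qed

theorem lemma2p5:
  fixes p m k :: nat and a b :: "'a::{field,finite}"
  assumes "prime p" and "m > 0" and "k > 0"
    and "CARD('a) = (p ^ m) ^ 2"
    and "(a, b) \<noteq> (0, 0)"
  shows "card {x \<in> unit_circle (p ^ m).
            b * x ^ (p ^ k + 1) + a * x ^ (p ^ k) + a ^ (p ^ m) * x + b ^ (p ^ m) = 0}
         \<in> {0, 1, 2, p ^ gcd k m + 1}"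
proof -
  have S_biaffine: "{x \<in> unit_circle (p ^ m).
            b * x ^ (p ^ k + 1) + a * x ^ (p ^ k) + a ^ (p ^ m) * x + b ^ (p ^ m) = 0}
      = {x \<in> unit_circle (p ^ m). biaffine a b (a ^ p ^ m) (b ^ p ^ m) (x ^ p ^ k) x = 0}"
    (is "?S = _")
    by (simp add: biaffine_power)
  have nonzero: "(a, b, a ^ p ^ m, b ^ p ^ m) \<noteq> (0, 0, 0, 0)"
    using assms(5) by auto
  show ?thesis
  proof (cases rule: card_le_2_or_three_distinct[of ?S])
    case 1
    then have "card ?S = 0 \<or> card ?S = 1 \<or> card ?S = 2"
      by linarith
    then show ?thesis
      by blast
  next
    case (2 r1 r2 r3)
    then show ?thesis
      using card_unit_circle_roots_if_three_roots[OF assms(4,1,2) S_biaffine nonzero] by simp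
  qed
qed

end
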